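(* Let $\epsilon > 0$ and $\delta \in (0,1)$, and set $d = \lceil \ln(1/\delta) \rceil$ and $w = 1 + \lceil e/\epsilon \rceil$. Consider a stream of $N$ records. Each record $r$ has a primary key (record id) $r_0$ and values $r_1,\dots,r_p$ on $p$ searchable attributes $a_1,\dots,a_p$; $\mathcal{D}(a_i)$ denotes the domain of $a_i$. Choose $d \cdot p$ hash functions $h_i^j : \mathcal{D}(a_i) \to \{1,\dots,w\}$, for $i \in \{1,\dots,p\}$ and $j \in \{1,\dots,d\}$, uniformly at random from a pairwise-independent family. Build $p$ arrays $CM_1,\dots,CM_p$, each of size $w \times d$, every cell of which initially holds an empty set of record ids. Each record $r$ is inserted by adding $r_0$ to the cell $CM_i[j, h_i^j(r_i)]$ for every $i \in \{1,\dots,p\}$ and every $j \in \{1,\dots,d\}$. A query $q = (q_1,\dots,q_p)$ consists of one equality predicate $a_i = q_i$ on each of the $p$ attributes. Let $f(q)$ be the number of records $r$ in the stream with $r_i = q_i$ for all $i$. Define the estimate $$\hat f(q) = \left| \bigcap_{i \in \{1,\dots,p\},\, j \in \{1,\dots,d\}} CM_i[j, h_i^j(q_i)] \right|.$$ Then $$\Pr\big(|\hat f(q) - f(q)| \le \epsilon^d (N - f(q)) \le \epsilon^d N\big) \ge 1 - \delta.$$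
   Context: This describes a sketch that extends the Count-min sketch by storing record ids in each cell. The probability is taken over the random choice of the hash functions. Record ids are distinct across records. *)

theory Defs
  imports "HOL-Probability.Probability"
begin

text \<open>A record is a pair (record id, attribute values); attribute i (1 \<le> i \<le> p) of
  record r is snd r i.  A hash function for attribute i maps values to {1..w}.\<close>

definition pairwise_indep_family :: "('v \<Rightarrow> nat) set \<Rightarrow> 'v set \<Rightarrow> nat \<Rightarrow> bool" where
  "pairwise_indep_family H D w \<longleftrightarrow>
     finite H \<and> H \<noteq> {} \<and> (\<forall>h\<in>H. h ` D \<subseteq> {1..w}) \<and>
     (\<forall>x\<in>D. \<forall>a\<in>{1..w}.
        real (card {h\<in>H. h x = a}) / real (card H) = 1 / real w) \<and>
     (\<forall>x\<in>D. \<forall>y\<in>D. x \<noteq> y \<longrightarrow> (\<forall>a\<in>{1..w}. \<forall>b\<in>{1..w}.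
        real (card {h\<in>H. h x = a \<and> h y = b}) / real (card H) = 1 / (real w)^2))"

text \<open>A sketch: CM i j c is the cell in row j, column c of array CM_i (a set of record ids).\<close>
type_synonym 'id sketch = "nat \<Rightarrow> nat \<Rightarrow> nat \<Rightarrow> 'id set"

definition cm_empty :: "'id sketch" where
  "cm_empty = (\<lambda>i j c. {})"

definition cm_insert :: "nat \<Rightarrow> nat \<Rightarrow> (nat \<times> nat \<Rightarrow> 'v \<Rightarrow> nat) \<Rightarrow>
    'id \<times> (nat \<Rightarrow> 'v) \<Rightarrow> 'id sketch \<Rightarrow> 'id sketch" where
  "cm_insert p d h r CM = (\<lambda>i j c.
     if i \<in> {1..p} \<and> j \<in> {1..d} \<and> c = h (i, j) (snd r i)
     then insert (fst r) (CM i j c) else CM i j c)"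

definition cm_build :: "nat \<Rightarrow> nat \<Rightarrow> (nat \<times> nat \<Rightarrow> 'v \<Rightarrow> nat) \<Rightarrow>
    ('id \<times> (nat \<Rightarrow> 'v)) list \<Rightarrow> 'id sketch" where
  "cm_build p d h rs = fold (cm_insert p d h) rs cm_empty"

definition cm_estimate :: "nat \<Rightarrow> nat \<Rightarrow> (nat \<times> nat \<Rightarrow> 'v \<Rightarrow> nat) \<Rightarrow>
    ('id \<times> (nat \<Rightarrow> 'v)) list \<Rightarrow> (nat \<Rightarrow> 'v) \<Rightarrow> nat" where
  "cm_estimate p d h rs q =
     card (\<Inter>(i, j)\<in>{1..p} \<times> {1..d}. cm_build p d h rs i j (h (i, j) (q i)))"

definition freq :: "nat \<Rightarrow> ('id \<times> (nat \<Rightarrow> 'v)) list \<Rightarrow> (nat \<Rightarrow> 'v) \<Rightarrow> nat" where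
  "freq p rs q = length (filter (\<lambda>r. \<forall>i\<in>{1..p}. snd r i = q i) rs)"

end

theory Submission
  imports Defs
begin

text \<open>A record lands in every cell selected by \<open>q\<close> iff its hash values agree with those of \<open>q\<close>
  in every row of every array, and since record ids are distinct the estimate counts exactly
  these colliding records.  Records matching \<open>q\<close> always collide, so the error is the number
  \<open>X\<close> of non-matching colliding records.  A non-matching record differs from \<open>q\<close> on some
  attribute \<open>i\<close>, and the \<open>d\<close> independent hash functions of array \<open>i\<close> all collide on it with
  probability \<open>w\<^sup>-\<^sup>d\<close> by pairwise independence.  Hence \<open>E X \<le> (N - f(q)) w\<^sup>-\<^sup>d\<close>, and Markov's
  inequality bounds the probability of \<open>X > \<epsilon>\<^sup>d (N - f(q))\<close> by \<open>(w \<epsilon>)\<^sup>-\<^sup>d \<le> e\<^sup>-\<^sup>d \<le> \<delta>\<close>.\<close>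

definition collides :: "nat \<Rightarrow> nat \<Rightarrow> (nat \<times> nat \<Rightarrow> 'v \<Rightarrow> nat) \<Rightarrow> (nat \<Rightarrow> 'v) \<Rightarrow>
    'id \<times> (nat \<Rightarrow> 'v) \<Rightarrow> bool" where
  "collides p d h q r \<longleftrightarrow> (\<forall>i\<in>{1..p}. \<forall>j\<in>{1..d}. h (i, j) (snd r i) = h (i, j) (q i))"

lemma fold_cm_insert_cell:
  "fold (cm_insert p d h) rs CM i j c = CM i j c \<union>
     {fst r | r. r \<in> set rs \<and> i \<in> {1..p} \<and> j \<in> {1..d} \<and> c = h (i, j) (snd r i)}"
  by (induction rs arbitrary: CM) (auto simp: cm_insert_def)

lemma cm_build_cell:
  "cm_build p d h rs i j c =
     {fst r | r. r \<in> set rs \<and> i \<in> {1..p} \<and> j \<in> {1..d} \<and> c = h (i, j) (snd r i)}"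
  by (simp add: cm_build_def fold_cm_insert_cell cm_empty_def)

lemma cm_estimate_eq_card_collides:
  assumes "p \<ge> 1" "d \<ge> 1" "distinct (map fst rs)"
  shows "cm_estimate p d h rs q = card {r \<in> set rs. collides p d h q r}"
proof -
  let ?C = "{r \<in> set rs. collides p d h q r}"
  let ?cells = "\<Inter>(i, j)\<in>{1..p} \<times> {1..d}. cm_build p d h rs i j (h (i, j) (q i))"
  have inj: "inj_on fst (set rs)"
    using assms(3) by (simp add: distinct_map)
  have "?cells \<subseteq> fst ` ?C"
  proof
    fix x assume x: "x \<in> ?cells"
    have "(1, 1) \<in> {1..p} \<times> {1..d}"
      using assms(1,2) by auto
    with x obtain r where r: "r \<in> set rs" "fst r = x"
      by (fastforce simp: cm_build_cell)
    have "h (i, j) (snd r i) = h (i, j) (q i)" if ij: "i \<in> {1..p}" "j \<in> {1..d}" for i j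
    proof -
      from x ij obtain r' where "r' \<in> set rs" "fst r' = x" "h (i, j) (q i) = h (i, j) (snd r' i)"
        by (fastforce simp: cm_build_cell)
      moreover from this r inj have "r' = r"
        by (auto dest: inj_onD)
      ultimately show ?thesis by simp
    qed
    with r show "x \<in> fst ` ?C"
      by (auto simp: collides_def)
  qed
  then have "?cells = fst ` ?C"
    by (rule equalityI) (force simp: cm_build_cell collides_def)
  moreover have "card (fst ` ?C) = card ?C"
    by (intro card_image inj_on_subset[OF inj]) auto
  ultimately show ?thesis
    by (simp add: cm_estimate_def)
qed

lemma freq_eq_card:
  assumes "distinct rs"
  shows "freq p rs q = card {r \<in> set rs. \<forall>i\<in>{1..p}. snd r i = q i}"
  using distinct_card[OF distinct_filter[OF assms]] by (simp add: freq_def)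

lemma freq_plus_card_mismatches:
  assumes "distinct rs"
  shows "freq p rs q + card {r \<in> set rs. \<exists>i\<in>{1..p}. snd r i \<noteq> q i} = length rs"
proof -
  have "card {r \<in> set rs. \<exists>i\<in>{1..p}. snd r i \<noteq> q i}
      = length (filter (\<lambda>r. \<not> (\<forall>i\<in>{1..p}. snd r i = q i)) rs)"
    using distinct_card[OF distinct_filter[OF assms]] by simp
  then show ?thesis
    using sum_length_filter_compl[of "\<lambda>r. \<forall>i\<in>{1..p}. snd r i = q i" rs]
    by (simp add: freq_def)
qed

lemma cm_estimate_minus_freq:
  assumes "p \<ge> 1" "d \<ge> 1" "distinct (map fst rs)"
  shows "real (cm_estimate p d h rs q) - real (freq p rs q) =
    real (card {r \<in> set rs. (\<exists>i\<in>{1..p}. snd r i \<noteq> q i) \<and> collides p d h q r})"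
proof -
  have "{r \<in> set rs. collides p d h q r} =
      {r \<in> set rs. \<forall>i\<in>{1..p}. snd r i = q i} \<union>
      {r \<in> set rs. (\<exists>i\<in>{1..p}. snd r i \<noteq> q i) \<and> collides p d h q r}"
    by (auto simp: collides_def)
  then have "card {r \<in> set rs. collides p d h q r} =
      card {r \<in> set rs. \<forall>i\<in>{1..p}. snd r i = q i} +
      card {r \<in> set rs. (\<exists>i\<in>{1..p}. snd r i \<noteq> q i) \<and> collides p d h q r}"
    by (simp add: card_Un_disjoint disjoint_iff)
  moreover have "distinct rs"
    using assms(3) by (simp add: distinct_map)
  ultimately show ?thesis
    using assms by (simp add: cm_estimate_eq_card_collides freq_eq_card)
qed

lemma pairwise_indep_family_collision_prob:
  assumes fam: "pairwise_indep_family H D w" and "x \<in> D" "y \<in> D" "x \<noteq> y"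
  shows "measure_pmf.prob (pmf_of_set H) {g. g x = g y} = 1 / real w"
proof -
  have fin: "finite H" and ne: "H \<noteq> {}" and range: "\<forall>g\<in>H. g x \<in> {1..w}"
    and pair: "\<And>a. a \<in> {1..w} \<Longrightarrow>
        real (card {g \<in> H. g x = a \<and> g y = a}) / real (card H) = 1 / (real w)\<^sup>2"
    using fam assms(2-4) unfolding pairwise_indep_family_def by blast+
  have "w \<ge> 1"
    using ne range by fastforce
  have diagonal: "H \<inter> {g. g x = g y} = (\<Union>a\<in>{1..w}. {g \<in> H. g x = a \<and> g y = a})"
    using range by auto
  have "card (H \<inter> {g. g x = g y}) = (\<Sum>a\<in>{1..w}. card {g \<in> H. g x = a \<and> g y = a})"
    unfolding diagonal by (rule card_UN_disjoint) (use fin in auto)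
  then have "real (card (H \<inter> {g. g x = g y})) / real (card H)
      = (\<Sum>a\<in>{1..w}. real (card {g \<in> H. g x = a \<and> g y = a}) / real (card H))"
    by (simp add: sum_divide_distrib)
  also have "\<dots> = 1 / real w"
    using pair \<open>w \<ge> 1\<close> by (simp add: power2_eq_square)
  finally show ?thesis
    using fin ne by (simp add: measure_pmf_of_set)
qed

lemma measure_Pi_pmf_all_in:
  assumes "finite A" "Z \<subseteq> A"
  shows "measure_pmf.prob (Pi_pmf A dflt p) {h. \<forall>x\<in>Z. h x \<in> B x} =
    (\<Prod>x\<in>Z. measure_pmf.prob (p x) (B x))"
proof -
  have "{h. \<forall>x\<in>Z. h x \<in> B x} = Pi A (\<lambda>x. if x \<in> Z then B x else UNIV)"
    using assms(2) by (auto simp: Pi_def)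
  then have "measure_pmf.prob (Pi_pmf A dflt p) {h. \<forall>x\<in>Z. h x \<in> B x} =
      (\<Prod>x\<in>A. if x \<in> Z then measure_pmf.prob (p x) (B x) else 1)"
    using assms(1) by (simp add: measure_Pi_pmf_Pi if_distrib cong: if_cong)
  also have "\<dots> = (\<Prod>x\<in>Z. measure_pmf.prob (p x) (B x))"
    using assms by (simp add: prod.If_cases Int_absorb1)
  finally show ?thesis .
qed

lemma prob_collides_le:
  fixes H :: "nat \<Rightarrow> ('v \<Rightarrow> nat) set"
  assumes "i \<in> {1..p}" "pairwise_indep_family (H i) (D i) w"
    and "snd r i \<in> D i" "q i \<in> D i" "snd r i \<noteq> q i"
  shows "measure_pmf.prob (Pi_pmf ({1..p} \<times> {1..d}) (\<lambda>_. 0) (\<lambda>(i, j). pmf_of_set (H i)))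
           {h. collides p d h q r} \<le> (1 / real w) ^ d"
proof -
  let ?M = "Pi_pmf ({1..p} \<times> {1..d}) (\<lambda>_. 0) (\<lambda>(i, j). pmf_of_set (H i))"
  let ?row = "{h. \<forall>z\<in>{i} \<times> {1..d}. h z \<in> {g. g (snd r i) = g (q i)}}"
  have "measure_pmf.prob ?M {h. collides p d h q r} \<le> measure_pmf.prob ?M ?row"
    using assms(1) by (intro measure_pmf.finite_measure_mono) (auto simp: collides_def)
  also have "\<dots> = (\<Prod>z\<in>{i} \<times> {1..d}.
      measure_pmf.prob (pmf_of_set (H (fst z))) {g. g (snd r i) = g (q i)})"
    using assms(1) by (subst measure_Pi_pmf_all_in) (auto simp: case_prod_beta)
  also have "\<dots> = (\<Prod>z\<in>{i} \<times> {1..d}. 1 / real w)"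
    using assms(2-5) by (intro prod.cong) (auto simp: pairwise_indep_family_collision_prob)
  also have "\<dots> = (1 / real w) ^ d"
    by simp
  finally show ?thesis .
qed

lemma prob_count_events_gt:
  fixes M :: "'a pmf" and E :: "'b \<Rightarrow> 'a set"
  assumes "finite B" "c > 0" "0 \<le> \<rho>" "\<And>r. r \<in> B \<Longrightarrow> measure_pmf.prob M (E r) \<le> \<rho>"
  shows "measure_pmf.prob M {x. c * real (card B) < real (card {r \<in> B. x \<in> E r})} \<le> \<rho> / c"
proof (cases "B = {}")
  case True
  then show ?thesis
    using assms(2,3) by simp
next
  case False
  define X where "X = (\<lambda>x. \<Sum>r\<in>B. indicator (E r) x :: real)"
  define t where "t = c * real (card B)"
  have "t > 0"
    using False assms(1,2) by (simp add: t_def card_gt_0_iff)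
  have count: "real (card {r \<in> B. x \<in> E r}) = X x" for x
    using assms(1) by (simp add: X_def indicator_def sum.If_cases Int_def)
  have integrable: "integrable M X"
    unfolding X_def
    by (intro Bochner_Integration.integrable_sum integrable_real_indicator)
       (auto simp: measure_pmf.emeasure_eq_measure)
  have "measure_pmf.expectation M X = (\<Sum>r\<in>B. measure_pmf.prob M (E r))"
    unfolding X_def
    by (subst Bochner_Integration.integral_sum)
       (auto intro!: integrable_real_indicator simp: measure_pmf.emeasure_eq_measure)
  also have "\<dots> \<le> real (card B) * \<rho>"
    using sum_mono[of B _ "\<lambda>_. \<rho>"] assms(4) by simp
  finally have expectation: "measure_pmf.expectation M X \<le> real (card B) * \<rho>" .
  have "measure_pmf.prob M {x. t < X x} \<le> measure_pmf.prob M {x \<in> space M. t \<le> X x}"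
    by (intro measure_pmf.finite_measure_mono) auto
  also have "\<dots> \<le> measure_pmf.expectation M X / t"
    using \<open>t > 0\<close> by (intro integral_Markov_inequality_measure[OF integrable]) (auto simp: X_def sum_nonneg)
  also have "\<dots> \<le> \<rho> / c"
    using expectation \<open>t > 0\<close> False assms(1,2)
    by (simp add: t_def divide_right_mono field_simps card_gt_0_iff)
  finally show ?thesis
    by (simp add: count t_def)
qed

lemma failure_bound_le:
  fixes \<epsilon> \<delta> w :: real and d :: nat
  assumes "\<epsilon> > 0" "\<delta> > 0" "exp 1 < w * \<epsilon>" "ln (1 / \<delta>) \<le> d"
  shows "(1 / w) ^ d / \<epsilon> ^ d \<le> \<delta>"
proof -
  have "0 < w * \<epsilon>"
    using assms(3) exp_gt_zero[of 1] by linarith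
  have "(1 / w) ^ d / \<epsilon> ^ d = (1 / (w * \<epsilon>)) ^ d"
    by (simp add: power_divide power_mult_distrib)
  also have "\<dots> \<le> (1 / exp 1) ^ d"
    using assms(3) \<open>0 < w * \<epsilon>\<close> by (intro power_mono frac_le) auto
  also have "\<dots> = exp (- real d)"
    by (simp add: exp_minus exp_of_nat_mult[symmetric] inverse_eq_divide power_one_over)
  also have "\<dots> \<le> exp (ln \<delta>)"
    using assms(2,4) by (intro exp_mono) (simp add: ln_div)
  also have "\<dots> = \<delta>"
    using assms(2) by simp
  finally show ?thesis .
qed

theorem lemma3p2:
  fixes \<epsilon> \<delta> :: real and p N :: nat
    and D :: "nat \<Rightarrow> 'v set" and H :: "nat \<Rightarrow> ('v \<Rightarrow> nat) set"
    and rs :: "('id \<times> (nat \<Rightarrow> 'v)) list" and q :: "nat \<Rightarrow> 'v"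
  defines "d \<equiv> nat \<lceil>ln (1 / \<delta>)\<rceil>"
    and "w \<equiv> 1 + nat \<lceil>exp 1 / \<epsilon>\<rceil>"
  assumes "\<epsilon> > 0" and "0 < \<delta>" and "\<delta> < 1"
    and "p \<ge> 1"
    and "\<And>i. i \<in> {1..p} \<Longrightarrow> pairwise_indep_family (H i) (D i) w"
    and "length rs = N" and "distinct (map fst rs)"
    and "\<And>r i. r \<in> set rs \<Longrightarrow> i \<in> {1..p} \<Longrightarrow> snd r i \<in> D i"
    and "\<And>i. i \<in> {1..p} \<Longrightarrow> q i \<in> D i"
  shows "measure_pmf.prob
           (Pi_pmf ({1..p} \<times> {1..d}) (\<lambda>_. 0) (\<lambda>(i, j). pmf_of_set (H i)))
           {h. \<bar>real (cm_estimate p d h rs q) - real (freq p rs q)\<bar>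
                  \<le> \<epsilon> ^ d * (real N - real (freq p rs q))
               \<and> \<epsilon> ^ d * (real N - real (freq p rs q)) \<le> \<epsilon> ^ d * real N}
         \<ge> 1 - \<delta>"
proof -
  let ?M = "Pi_pmf ({1..p} \<times> {1..d}) (\<lambda>_. 0) (\<lambda>(i, j). pmf_of_set (H i))"
  define mism where "mism = {r \<in> set rs. \<exists>i\<in>{1..p}. snd r i \<noteq> q i}"
  define bad where "bad = {h. \<epsilon> ^ d * real (card mism) <
    real (card {r \<in> mism. h \<in> {h. collides p d h q r}})}"
  have "ln (1 / \<delta>) > 0"
    using assms(4,5) by simp
  then have "d \<ge> 1" and "ln (1 / \<delta>) \<le> real d"
    unfolding d_def by linarith+
  have "real w \<ge> 1 + exp 1 / \<epsilon>"
    unfolding w_def by linarith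
  then have "exp 1 < real w * \<epsilon>"
    using assms(3) by (simp add: field_simps)
  have error: "real (cm_estimate p d h rs q) - real (freq p rs q) =
      real (card {r \<in> mism. h \<in> {h. collides p d h q r}})" for h
    using cm_estimate_minus_freq[OF assms(6) \<open>d \<ge> 1\<close> assms(9)]
    by (simp add: mism_def conj_assoc)
  have mism_count: "real N - real (freq p rs q) = real (card mism)"
    using freq_plus_card_mismatches[of rs p q] assms(8,9)
    by (simp add: mism_def distinct_map)
  have "\<epsilon> ^ d * (real N - real (freq p rs q)) \<le> \<epsilon> ^ d * real N"
    using assms(3) by (intro mult_left_mono) auto
  then have "UNIV - bad \<subseteq> {h. \<bar>real (cm_estimate p d h rs q) - real (freq p rs q)\<bar>
                  \<le> \<epsilon> ^ d * (real N - real (freq p rs q))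
               \<and> \<epsilon> ^ d * (real N - real (freq p rs q)) \<le> \<epsilon> ^ d * real N}"
    (is "_ \<subseteq> ?good")
    by (auto simp: bad_def error mism_count not_less)
  then have "1 - measure_pmf.prob ?M bad \<le> measure_pmf.prob ?M ?good"
    using measure_pmf.finite_measure_mono[of "UNIV - bad" ?good ?M]
      measure_pmf.prob_compl[of bad ?M] by simp
  moreover have "measure_pmf.prob ?M bad \<le> (1 / real w) ^ d / \<epsilon> ^ d"
    unfolding bad_def
  proof (rule prob_count_events_gt)
    fix r assume "r \<in> mism"
    then obtain i where "i \<in> {1..p}" "snd r i \<noteq> q i" "r \<in> set rs"
      by (auto simp: mism_def)
    then show "measure_pmf.prob ?M {h. collides p d h q r} \<le> (1 / real w) ^ d"
      using assms(7,10,11) by (intro prob_collides_le[where D = D]) auto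
  qed (use assms(3) in \<open>auto simp: mism_def\<close>)
  moreover have "(1 / real w) ^ d / \<epsilon> ^ d \<le> \<delta>"
    using \<open>exp 1 < real w * \<epsilon>\<close> \<open>ln (1 / \<delta>) \<le> real d\<close> assms(3,4)
    by (intro failure_bound_le) auto
  ultimately show ?thesis
    by linarith
qed

end
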